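(* Let $T$ be a theory over a first-order signature $(\Sigma,\Pi)$ whose declarations are all on standard form, over a variable system with the de Bruijn property. Let $F:\mathcal F_\Sigma\to\mathcal C$ be a cwf morphism, $\mathcal D$ a first-order hyperdoctrine over $\mathcal C$, and $G,G':\mathcal H_{\Sigma,\Pi,T}\to\mathcal D$ two $F$-based hyperdoctrine morphisms. If $G_\Gamma(\Gamma,R(\mathrm{OV}(\Gamma)))=G'_\Gamma(\Gamma,R(\mathrm{OV}(\Gamma)))$ in $\mathrm{Pr}^{\mathcal D}(F(\Gamma))$ for every $(\Gamma,R)\in\Pi$, then $G=G'$ (i.e. $G_\Delta(P)=G'_\Delta(P)$ for all objects $\Delta$ of $\mathcal F_\Sigma$ and all $P\in\mathrm{Pr}_{\Sigma,\Pi,T}(\Delta)$).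
   Context: Type system: fix an infinite set $V$ of variables with decidable equality and a fresh variable provider: functions $\varphi,\mathsf{fr}$ assigning to each finite $X\subseteq V$ an inhabited $\varphi(X)\subseteq V\setminus X$ and $\mathsf{fr}(X)\in\varphi(X)$; de Bruijn property: $\varphi(X)=\{\mathsf{fr}(X)\}$. Disjoint sets $F$ (function symbols), $T$ (type symbols). Preelements: terms from variables and $F$; pretypes $S(t_1,\ldots,t_n)$, $S\in T$. $\mathrm V(E)$: variables of $E$; $E[\bar a/\bar x]$: simultaneous substitution. Precontext $\Gamma=x_1:A_1,\ldots,x_n:A_n$ with $x_k\in\varphi(\{x_1,\ldots,x_{k-1}\})$, $\mathrm V(A_k)\subseteq\{x_1,\ldots,x_{k-1}\}$; $\mathrm{OV}(\Gamma)=x_1,\ldots,x_n$; $\mathrm{Fresh}(\Gamma)=\varphi(\mathrm V(\Gamma))$, $\mathrm{fresh}(\Gamma)=\mathsf{fr}(\mathrm V(\Gamma))$; $E[\bar a/\Gamma]=E[\bar a/x_1,\ldots,x_n]$. Top variables $\mathrm{TV}(\langle\rangle)=\emptyset$, $\mathrm{TV}(\Gamma,x:A)=(\mathrm{TV}(\Gamma)\setminus\mathrm V(A))\cup\{x\}$; a determining sequence is a strictly increasing $\bar i=i_1,\ldots,i_k$ with $\mathrm{TV}(\Gamma)\subseteq\{x_{i_1},\ldots,x_{i_k}\}$, $\bar a_{\bar i}=a_{i_1},\ldots,a_{i_k}$; a declaration is on standard form if $\bar i=1,\ldots,n$ (then $\bar i$ is omitted). Declarations $(\Gamma,S,\bar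 i)$ and $(\Gamma,f,\bar i,U)$ ($\mathrm V(U)\subseteq\mathrm V(\Gamma)$), each symbol at most once. $\mathcal J(\Sigma)$: smallest set of judgements closed under (R1) $\langle\rangle$ context; (R2) $\Gamma$ context, $A$ type $(\Gamma)$ $\Rightarrow$ $\Gamma,x:A$ context ($x\in\mathrm{Fresh}(\Gamma)$); (R3) $x_1:A_1,\ldots,x_n:A_n$ context $\Rightarrow$ $x_i:A_i\ (x_1:A_1,\ldots,x_n:A_n)$; (R4) $(\Gamma,S,\bar i)\in\Sigma$, $\bar a:\Delta\to\Gamma$ $\Rightarrow$ $S(\bar a_{\bar i})$ type $(\Delta)$; (R5) $(\Gamma,f,\bar i,U)\in\Sigma$, $\bar a:\Delta\to\Gamma$, $U[\bar a/\Gamma]$ type $(\Delta)$ $\Rightarrow$ $f(\bar a_{\bar i}):U[\bar a/\Gamma]\ (\Delta)$; where "$\bar a:\Delta\to\Gamma$" abbreviates $\Delta$ context, $\Gamma$ context, $a_k:A_k[a_1,\ldots,a_{k-1}/x_1,\ldots,x_{k-1}]\ (\Delta)$. $\Sigma$ is a signature if declared contexts are contexts and declared $U$ are types in $\mathcal J(\Sigma)$. Cwf: a category $\mathcal C$ with terminal object; classes $\mathrm{Ty}(\Gamma)$ with functorial substitution $A\{f\}$; context extension $\Gamma.A$ with $\mathrm p(A):\Gamma.A\to\Gamma$; classes $\mathrm{Tm}(\Gamma,A)$ with functorial $a\{f\}\in\mathrm{Tm}(\Delta,A\{f\})$; $\mathrm v_A\in\mathrm{Tm}(\Gamma.A,A\{\mathrm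 p(A)\})$; $\langle f,a\rangle_A:\Delta\to\Gamma.A$ for $a\in\mathrm{Tm}(\Delta,A\{f\})$ with $\mathrm p(A)\langle f,a\rangle_A=f$, $\mathrm v_A\{\langle f,a\rangle_A\}=a$, $\langle\mathrm p(A)h,\mathrm v_A\{h\}\rangle_A=h$, $\langle f,a\rangle_A g=\langle fg,a\{g\}\rangle_A$; $f.A=\langle f\circ\mathrm p(A\{f\}),\mathrm v_{A\{f\}}\rangle_A:\Delta.A\{f\}\to\Gamma.A$. A cwf morphism $(F,\sigma,\theta):\mathcal C\to\mathcal C'$: a functor $F$ preserving the terminal object, $\sigma_\Gamma:\mathrm{Ty}(\Gamma)\to\mathrm{Ty}'(F\Gamma)$ with $\sigma_\Delta(A\{f\})=\sigma_\Gamma(A)\{Ff\}$, $F(\Gamma.A)=F\Gamma.\sigma_\Gamma(A)$, $F(\mathrm p(A))=\mathrm p(\sigma_\Gamma(A))$, and $\theta_{\Gamma,A}:\mathrm{Tm}(\Gamma,A)\to\mathrm{Tm}'(F\Gamma,\sigma_\Gamma(A))$ commuting with substitution, with $\theta(\mathrm v_A)=\mathrm v_{\sigma_\Gamma(A)}$ and $F\langle f,a\rangle_A=\langle Ff,\theta(a)\rangle_{\sigma_\Gamma(A)}$. The cwf $\mathcal F_\Sigma$: objects are contexts $\Gamma$ (i.e. ($\Gamma$ context)$\in\mathcal J(\Sigma)$); morphisms $(\Delta,\Gamma,\bar a)$ with $\bar a:\Delta\to\Gamma$ in $\mathcal J(\Sigma)$, composed by substitution, identity $(\Gamma,\Gamma,\mathrm{OV}(\Gamma))$;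 $\mathrm{Ty}(\Gamma)=\{(\Gamma,A):(A\text{ type }(\Gamma))\in\mathcal J(\Sigma)\}$, $(\Gamma,A)\{(\Delta,\Gamma,\bar a)\}=(\Delta,A[\bar a/\Gamma])$; $\mathrm{Tm}(\Gamma,(\Gamma,A))=\{((\Gamma,A),a):(a:A\ (\Gamma))\in\mathcal J(\Sigma)\}$; $\Gamma.(\Gamma,S)=\langle\Gamma,\mathrm{fresh}(\Gamma):S\rangle$, $\mathrm p=(\Gamma.(\Gamma,S),\Gamma,\mathrm{OV}(\Gamma))$, $\mathrm v=((\Gamma.(\Gamma,S),S),\mathrm{fresh}(\Gamma))$, $\langle(\Delta,\Gamma,\bar s),((\Delta,S[\bar s/\Gamma]),b)\rangle=(\Delta,\Gamma.(\Gamma,S),(\bar s,b))$. Heyting (pre)algebra: a preorder $\le$ (not necessarily antisymmetric) with $\top,\bot,\wedge,\vee,\to$ satisfying $\bot\le x\le\top$, $z\le x\wedge y$ iff $z\le x$ and $z\le y$, $x\vee y\le z$ iff $x\le z$ and $y\le z$, $z\le(x\to y)$ iff $z\wedge x\le y$; morphisms are monotone maps preserving the operations and constants. A first-order hyperdoctrine over a cwf $\mathcal C$ is $(\mathcal C,\mathrm{Pr},\forall,\exists)$ with $\mathrm{Pr}:\mathcal C^{\mathrm{op}}\to\mathrm{Heyting}$ a functor ($R\{f\}=\mathrm{Pr}(f)(R)$) and, for $S\in\mathrm{Ty}(\Gamma)$, monotone $\forall_S,\exists_S:\mathrm{Pr}(\Gamma.S)\to\mathrm{Pr}(\Gamma)$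 with $Q\le\forall_S(R)$ iff $Q\{\mathrm p(S)\}\le R$, and $\exists_S(R)\le Q$ iff $R\le Q\{\mathrm p(S)\}$ ($Q\in\mathrm{Pr}(\Gamma)$, $R\in\mathrm{Pr}(\Gamma.S)$), and for $f:\Delta\to\Gamma$: $\forall_S(R)\{f\}=\forall_{S\{f\}}(R\{f.S\})$, $\exists_S(R)\{f\}=\exists_{S\{f\}}(R\{f.S\})$. Given a cwf morphism $F=(F,\sigma,\theta):\mathcal C\to\mathcal C'$ and hyperdoctrines $\mathcal H=(\mathcal C,\mathrm{Pr},\forall,\exists)$, $\mathcal H'=(\mathcal C',\mathrm{Pr}',\forall',\exists')$, an $F$-based morphism $G:\mathcal H\to\mathcal H'$ is a family of Heyting morphisms $G_\Gamma:\mathrm{Pr}(\Gamma)\to\mathrm{Pr}'(F\Gamma)$ with $G_\Delta(R\{f\})=G_\Gamma(R)\{Ff\}$ for $f:\Delta\to\Gamma$, $G_\Gamma(\forall_S R)=\forall'_{\sigma_\Gamma(S)}(G_{\Gamma.S}R)$ and $G_\Gamma(\exists_S R)=\exists'_{\sigma_\Gamma(S)}(G_{\Gamma.S}R)$. Logic: predicate symbols from a set $P$ disjoint from $F\cup T$; a predicate declaration is $(\Gamma,\bar i,R)$ with ($\Gamma$ context)$\in\mathcal J(\Sigma)$, $\bar i$ determining, $R\in P$ (written $(\Gamma,R)$ on standard form); a predicate signature $\Pi$ declares each symbol at most once. $\mathrm{Form}(\Sigma,\Pi)$ is the smallest set of judgements "$\phi$ form $(\Gamma)$" with: $R(\bar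 a_{\bar i})$ form $(\Delta)$ for $(\Gamma,\bar i,R)\in\Pi$ and $\bar a:\Delta\to\Gamma$ in $\mathcal J(\Sigma)$; $\bot,\top$ form $(\Gamma)$ for contexts $\Gamma$; $(\phi\circ\psi)$ form $(\Gamma)$ for $\circ\in\{\wedge,\vee,\to\}$ from $\phi,\psi$ form $(\Gamma)$; $(Qx:A)\phi$ form $(\Gamma)$ for $Q\in\{\forall,\exists\}$ from $\phi$ form $(\Gamma,x:A)$ (with $(A\text{ type }(\Gamma))\in\mathcal J(\Sigma)$). Capture-avoiding substitution for $\bar a:\Delta\to\Gamma$: $\phi\{(\Delta,\Gamma,\bar a)\}=\phi[\bar a/\Gamma]$ for atomic $\phi$; it commutes with $\top,\bot,\wedge,\vee,\to$; and $((Qx:A)\theta)\{(\Delta,\Gamma,\bar a)\}=(Qy:A[\bar a/\Gamma])\,\theta\{(\langle\Delta,y:A[\bar a/\Gamma]\rangle,\langle\Gamma,x:A\rangle,(\bar a,y))\}$ with $y=\mathrm{fresh}(\Delta)$. A sequent is $\phi\Rightarrow_\Gamma\psi$ with $\phi,\psi$ form $(\Gamma)$; a theory is a set of sequents. Write $\mathbf p_\Gamma(x:A)=(\langle\Gamma,x:A\rangle,\Gamma,\mathrm{OV}(\Gamma))$. $\mathrm{Thm}(\Sigma,\Pi,T)$ is the smallest set of sequents containing $T$ and closed under: $\phi\Rightarrow_\Gamma\phi$; cut; $\theta\wedge\psi\Rightarrow_\Gamma\theta$, $\theta\wedge\psi\Rightarrow_\Gamma\psi$, from $\phi\Rightarrow_\Gamma\theta$,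 $\phi\Rightarrow_\Gamma\psi$ infer $\phi\Rightarrow_\Gamma\theta\wedge\psi$, $\phi\Rightarrow_\Gamma\top$; $\theta\Rightarrow_\Gamma\theta\vee\psi$, $\psi\Rightarrow_\Gamma\theta\vee\psi$, from $\theta\Rightarrow_\Gamma\phi$, $\psi\Rightarrow_\Gamma\phi$ infer $\theta\vee\psi\Rightarrow_\Gamma\phi$, $\bot\Rightarrow_\Gamma\phi$; $\theta\wedge\psi\Rightarrow_\Gamma\phi$ iff $\theta\Rightarrow_\Gamma\psi\to\phi$; $\phi\{\mathbf p_\Gamma(x:A)\}\Rightarrow_{\Gamma,x:A}\psi$ iff $\phi\Rightarrow_\Gamma(\forall x:A)\psi$; $\psi\Rightarrow_{\Gamma,x:A}\phi\{\mathbf p_\Gamma(x:A)\}$ iff $(\exists x:A)\psi\Rightarrow_\Gamma\phi$ (each "iff" read as two rules); and substitution: from $\phi\Rightarrow_\Gamma\psi$ and $\bar a:\Delta\to\Gamma$ infer $\phi\{(\Delta,\Gamma,\bar a)\}\Rightarrow_\Delta\psi\{(\Delta,\Gamma,\bar a)\}$. Lindenbaum–Tarski hyperdoctrine $\mathcal H_{\Sigma,\Pi,T}=(\mathcal F_\Sigma,\mathrm{Pr}_{\Sigma,\Pi,T},\forall,\exists)$: $\mathrm{Pr}_{\Sigma,\Pi,T}(\Gamma)=\{(\Gamma,\phi):(\phi\text{ form }(\Gamma))\in\mathrm{Form}(\Sigma,\Pi)\}$ ordered by $(\Gamma,\phi)\le(\Gamma,\psi)$ iff $(\phi\Rightarrow_\Gamma\psi)\in\mathrm{Thm}(\Sigma,\Pi,T)$,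 Heyting operations given by the connectives; $\mathrm{Pr}((\Delta,\Gamma,\bar a))(\Gamma,\phi)=(\Delta,\phi\{(\Delta,\Gamma,\bar a)\})$; $\forall_{(\Gamma,A)}(\langle\Gamma,x:A\rangle,\psi)=(\Gamma,(\forall x:A)\psi)$, $\exists_{(\Gamma,A)}(\langle\Gamma,x:A\rangle,\psi)=(\Gamma,(\exists x:A)\psi)$. *)

theory Defs
  imports Main
begin

section \<open>Variable systems\<close>

definition var_system :: "('v set \<Rightarrow> 'v set) \<Rightarrow> ('v set \<Rightarrow> 'v) \<Rightarrow> bool" where
  "var_system phi fr \<longleftrightarrow> infinite (UNIV :: 'v set) \<and>
     (\<forall>X. finite X \<longrightarrow> phi X \<noteq> {} \<and> phi X \<subseteq> - X \<and> fr X \<in> phi X)"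

definition de_bruijn :: "('v set \<Rightarrow> 'v set) \<Rightarrow> ('v set \<Rightarrow> 'v) \<Rightarrow> bool" where
  "de_bruijn phi fr \<longleftrightarrow> (\<forall>X. finite X \<longrightarrow> phi X = {fr X})"

section \<open>Preelements, pretypes, precontexts\<close>

datatype ('v, 'f) tm = Var 'v | Fn 'f "('v, 'f) tm list"

datatype ('v, 'f, 's) ty = Ty 's "('v, 'f) tm list"

type_synonym ('v, 'f, 's) ctx = "('v \<times> ('v, 'f, 's) ty) list"

fun vars_tm :: "('v, 'f) tm \<Rightarrow> 'v set" where
  "vars_tm (Var x) = {x}"
| "vars_tm (Fn f ts) = (\<Union>t\<in>set ts. vars_tm t)"

fun vars_ty :: "('v, 'f, 's) ty \<Rightarrow> 'v set" where
  "vars_ty (Ty S ts) = (\<Union>t\<in>set ts. vars_tm t)"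

definition vars_ctx :: "('v, 'f, 's) ctx \<Rightarrow> 'v set" where
  "vars_ctx \<Gamma> = (\<Union>(x, A)\<in>set \<Gamma>. insert x (vars_ty A))"

definition OV :: "('v, 'f, 's) ctx \<Rightarrow> 'v list" where
  "OV \<Gamma> = map fst \<Gamma>"

definition sb :: "'v list \<Rightarrow> ('v, 'f) tm list \<Rightarrow> 'v \<Rightarrow> ('v, 'f) tm" where
  "sb xs as x = (case map_of (zip xs as) x of Some a \<Rightarrow> a | None \<Rightarrow> Var x)"

fun subst_tm :: "('v \<Rightarrow> ('v, 'f) tm) \<Rightarrow> ('v, 'f) tm \<Rightarrow> ('v, 'f) tm" where
  "subst_tm s (Var x) = s x"
| "subst_tm s (Fn f ts) = Fn f (map (subst_tm s) ts)"

fun subst_ty :: "('v \<Rightarrow> ('v, 'f) tm) \<Rightarrow> ('v, 'f, 's) ty \<Rightarrow> ('v, 'f, 's) ty" where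
  "subst_ty s (Ty S ts) = Ty S (map (subst_tm s) ts)"

text \<open>Selection along a (1-based) index sequence: as_is = a_{i_1}, ..., a_{i_k}.\<close>
definition sel :: "'a list \<Rightarrow> nat list \<Rightarrow> 'a list" where
  "sel as is = map (\<lambda>i. as ! (i - 1)) is"

definition TV :: "('v, 'f, 's) ctx \<Rightarrow> 'v set" where
  "TV \<Gamma> = foldl (\<lambda>X (x, A). (X - vars_ty A) \<union> {x}) {} \<Gamma>"

definition determining :: "('v, 'f, 's) ctx \<Rightarrow> nat list \<Rightarrow> bool" where
  "determining \<Gamma> is \<longleftrightarrow> sorted_wrt (<) is \<and> set is \<subseteq> {1..length \<Gamma>} \<and>
     TV \<Gamma> \<subseteq> {OV \<Gamma> ! (i - 1) | i. i \<in> set is}"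

definition standard_seq :: "('v, 'f, 's) ctx \<Rightarrow> nat list \<Rightarrow> bool" where
  "standard_seq \<Gamma> is \<longleftrightarrow> is = [1..<length \<Gamma> + 1]"

section \<open>Signatures and judgements\<close>

record ('v, 'f, 's) sig =
  tdecls :: "(('v, 'f, 's) ctx \<times> 's \<times> nat list) set"
  fdecls :: "(('v, 'f, 's) ctx \<times> 'f \<times> nat list \<times> ('v, 'f, 's) ty) set"

datatype ('v, 'f, 's) jdg =
    JCtx "('v, 'f, 's) ctx"
  | JType "('v, 'f, 's) ctx" "('v, 'f, 's) ty"
  | JTm "('v, 'f, 's) ctx" "('v, 'f) tm" "('v, 'f, 's) ty"

inductive_set Jdg :: "('v set \<Rightarrow> 'v set) \<Rightarrow> ('v, 'f, 's) sig \<Rightarrow> ('v, 'f, 's) jdg set"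
  for phi :: "'v set \<Rightarrow> 'v set" and Sg :: "('v, 'f, 's) sig" where
  R1: "JCtx [] \<in> Jdg phi Sg"
| R2: "JCtx \<Gamma> \<in> Jdg phi Sg \<Longrightarrow> JType \<Gamma> A \<in> Jdg phi Sg \<Longrightarrow> x \<in> phi (vars_ctx \<Gamma>)
        \<Longrightarrow> JCtx (\<Gamma> @ [(x, A)]) \<in> Jdg phi Sg"
| R3: "JCtx \<Gamma> \<in> Jdg phi Sg \<Longrightarrow> i < length \<Gamma>
        \<Longrightarrow> JTm \<Gamma> (Var (fst (\<Gamma> ! i))) (snd (\<Gamma> ! i)) \<in> Jdg phi Sg"
| R4: "(\<Gamma>, S, is) \<in> tdecls Sg \<Longrightarrow> JCtx \<Delta> \<in> Jdg phi Sg \<Longrightarrow> JCtx \<Gamma> \<in> Jdg phi Sg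
        \<Longrightarrow> length as = length \<Gamma>
        \<Longrightarrow> (\<forall>k < length \<Gamma>. JTm \<Delta> (as ! k)
               (subst_ty (sb (take k (OV \<Gamma>)) (take k as)) (snd (\<Gamma> ! k))) \<in> Jdg phi Sg)
        \<Longrightarrow> JType \<Delta> (Ty S (sel as is)) \<in> Jdg phi Sg"
| R5: "(\<Gamma>, f, is, U) \<in> fdecls Sg \<Longrightarrow> JCtx \<Delta> \<in> Jdg phi Sg \<Longrightarrow> JCtx \<Gamma> \<in> Jdg phi Sg
        \<Longrightarrow> length as = length \<Gamma>
        \<Longrightarrow> (\<forall>k < length \<Gamma>. JTm \<Delta> (as ! k)
               (subst_ty (sb (take k (OV \<Gamma>)) (take k as)) (snd (\<Gamma> ! k))) \<in> Jdg phi Sg)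
        \<Longrightarrow> JType \<Delta> (subst_ty (sb (OV \<Gamma>) as) U) \<in> Jdg phi Sg
        \<Longrightarrow> JTm \<Delta> (Fn f (sel as is)) (subst_ty (sb (OV \<Gamma>) as) U) \<in> Jdg phi Sg"

definition morph :: "('v, 'f, 's) jdg set \<Rightarrow> ('v, 'f, 's) ctx \<Rightarrow> ('v, 'f, 's) ctx
                      \<Rightarrow> ('v, 'f) tm list \<Rightarrow> bool" where
  "morph J \<Delta> \<Gamma> as \<longleftrightarrow> JCtx \<Delta> \<in> J \<and> JCtx \<Gamma> \<in> J \<and> length as = length \<Gamma> \<and>
     (\<forall>k < length \<Gamma>. JTm \<Delta> (as ! k)
        (subst_ty (sb (take k (OV \<Gamma>)) (take k as)) (snd (\<Gamma> ! k))) \<in> J)"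

definition is_signature :: "('v set \<Rightarrow> 'v set) \<Rightarrow> ('v, 'f, 's) sig \<Rightarrow> bool" where
  "is_signature phi Sg \<longleftrightarrow>
     (\<forall>(\<Gamma>, S, is) \<in> tdecls Sg. determining \<Gamma> is \<and> JCtx \<Gamma> \<in> Jdg phi Sg) \<and>
     (\<forall>(\<Gamma>, f, is, U) \<in> fdecls Sg. determining \<Gamma> is \<and> vars_ty U \<subseteq> vars_ctx \<Gamma> \<and>
        JCtx \<Gamma> \<in> Jdg phi Sg \<and> JType \<Gamma> U \<in> Jdg phi Sg) \<and>
     (\<forall>d1 \<in> tdecls Sg. \<forall>d2 \<in> tdecls Sg. fst (snd d1) = fst (snd d2) \<longrightarrow> d1 = d2) \<and>
     (\<forall>d1 \<in> fdecls Sg. \<forall>d2 \<in> fdecls Sg. fst (snd d1) = fst (snd d2) \<longrightarrow> d1 = d2)"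

definition sig_standard :: "('v, 'f, 's) sig \<Rightarrow> bool" where
  "sig_standard Sg \<longleftrightarrow> (\<forall>(\<Gamma>, S, is) \<in> tdecls Sg. standard_seq \<Gamma> is) \<and>
     (\<forall>(\<Gamma>, f, is, U) \<in> fdecls Sg. standard_seq \<Gamma> is)"

section \<open>Logic: predicate signatures, formulas, theorems\<close>

type_synonym ('v, 'f, 's, 'p) psig = "(('v, 'f, 's) ctx \<times> nat list \<times> 'p) set"

definition is_pred_sig :: "('v set \<Rightarrow> 'v set) \<Rightarrow> ('v, 'f, 's) sig \<Rightarrow> ('v, 'f, 's, 'p) psig \<Rightarrow> bool" where
  "is_pred_sig phi Sg Pi \<longleftrightarrow>
     (\<forall>(\<Gamma>, is, R) \<in> Pi. JCtx \<Gamma> \<in> Jdg phi Sg \<and> determining \<Gamma> is) \<and>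
     (\<forall>d1 \<in> Pi. \<forall>d2 \<in> Pi. snd (snd d1) = snd (snd d2) \<longrightarrow> d1 = d2)"

definition psig_standard :: "('v, 'f, 's, 'p) psig \<Rightarrow> bool" where
  "psig_standard Pi \<longleftrightarrow> (\<forall>(\<Gamma>, is, R) \<in> Pi. standard_seq \<Gamma> is)"

datatype ('v, 'f, 's, 'p) form =
    Pred 'p "('v, 'f) tm list"
  | FBot
  | FTop
  | FConj "('v, 'f, 's, 'p) form" "('v, 'f, 's, 'p) form"
  | FDisj "('v, 'f, 's, 'p) form" "('v, 'f, 's, 'p) form"
  | FImp "('v, 'f, 's, 'p) form" "('v, 'f, 's, 'p) form"
  | FAll 'v "('v, 'f, 's) ty" "('v, 'f, 's, 'p) form"
  | FEx 'v "('v, 'f, 's) ty" "('v, 'f, 's, 'p) form"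

inductive_set Form :: "('v set \<Rightarrow> 'v set) \<Rightarrow> ('v, 'f, 's) sig \<Rightarrow> ('v, 'f, 's, 'p) psig
                        \<Rightarrow> (('v, 'f, 's) ctx \<times> ('v, 'f, 's, 'p) form) set"
  for phi Sg Pi where
  F_pred: "(\<Gamma>, is, R) \<in> Pi \<Longrightarrow> morph (Jdg phi Sg) \<Delta> \<Gamma> as
            \<Longrightarrow> (\<Delta>, Pred R (sel as is)) \<in> Form phi Sg Pi"
| F_bot: "JCtx \<Gamma> \<in> Jdg phi Sg \<Longrightarrow> (\<Gamma>, FBot) \<in> Form phi Sg Pi"
| F_top: "JCtx \<Gamma> \<in> Jdg phi Sg \<Longrightarrow> (\<Gamma>, FTop) \<in> Form phi Sg Pi"
| F_conj: "(\<Gamma>, \<phi>) \<in> Form phi Sg Pi \<Longrightarrow> (\<Gamma>, \<psi>) \<in> Form phi Sg Pi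
            \<Longrightarrow> (\<Gamma>, FConj \<phi> \<psi>) \<in> Form phi Sg Pi"
| F_disj: "(\<Gamma>, \<phi>) \<in> Form phi Sg Pi \<Longrightarrow> (\<Gamma>, \<psi>) \<in> Form phi Sg Pi
            \<Longrightarrow> (\<Gamma>, FDisj \<phi> \<psi>) \<in> Form phi Sg Pi"
| F_imp: "(\<Gamma>, \<phi>) \<in> Form phi Sg Pi \<Longrightarrow> (\<Gamma>, \<psi>) \<in> Form phi Sg Pi
            \<Longrightarrow> (\<Gamma>, FImp \<phi> \<psi>) \<in> Form phi Sg Pi"
| F_all: "(\<Gamma> @ [(x, A)], \<phi>) \<in> Form phi Sg Pi \<Longrightarrow> JType \<Gamma> A \<in> Jdg phi Sg
            \<Longrightarrow> (\<Gamma>, FAll x A \<phi>) \<in> Form phi Sg Pi"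
| F_ex: "(\<Gamma> @ [(x, A)], \<phi>) \<in> Form phi Sg Pi \<Longrightarrow> JType \<Gamma> A \<in> Jdg phi Sg
            \<Longrightarrow> (\<Gamma>, FEx x A \<phi>) \<in> Form phi Sg Pi"

primrec fsub :: "('v set \<Rightarrow> 'v) \<Rightarrow> ('v, 'f, 's) ctx \<Rightarrow> ('v, 'f, 's) ctx \<Rightarrow> ('v, 'f) tm list
                  \<Rightarrow> ('v, 'f, 's, 'p) form \<Rightarrow> ('v, 'f, 's, 'p) form" where
  "fsub fr \<Delta> \<Gamma> as (Pred R ts) = Pred R (map (subst_tm (sb (OV \<Gamma>) as)) ts)"
| "fsub fr \<Delta> \<Gamma> as FBot = FBot"
| "fsub fr \<Delta> \<Gamma> as FTop = FTop"
| "fsub fr \<Delta> \<Gamma> as (FConj \<phi> \<psi>) = FConj (fsub fr \<Delta> \<Gamma> as \<phi>) (fsub fr \<Delta> \<Gamma> as \<psi>)"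
| "fsub fr \<Delta> \<Gamma> as (FDisj \<phi> \<psi>) = FDisj (fsub fr \<Delta> \<Gamma> as \<phi>) (fsub fr \<Delta> \<Gamma> as \<psi>)"
| "fsub fr \<Delta> \<Gamma> as (FImp \<phi> \<psi>) = FImp (fsub fr \<Delta> \<Gamma> as \<phi>) (fsub fr \<Delta> \<Gamma> as \<psi>)"
| "fsub fr \<Delta> \<Gamma> as (FAll x A \<theta>) =
     (let y = fr (vars_ctx \<Delta>); A' = subst_ty (sb (OV \<Gamma>) as) A
      in FAll y A' (fsub fr (\<Delta> @ [(y, A')]) (\<Gamma> @ [(x, A)]) (as @ [Var y]) \<theta>))"
| "fsub fr \<Delta> \<Gamma> as (FEx x A \<theta>) =
     (let y = fr (vars_ctx \<Delta>); A' = subst_ty (sb (OV \<Gamma>) as) A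
      in FEx y A' (fsub fr (\<Delta> @ [(y, A')]) (\<Gamma> @ [(x, A)]) (as @ [Var y]) \<theta>))"

text \<open>Substitution along the projection  p_\<Gamma>(x:A) = (\<Gamma>,x:A ; \<Gamma> ; OV \<Gamma>).\<close>
definition fsub_p :: "('v set \<Rightarrow> 'v) \<Rightarrow> ('v, 'f, 's) ctx \<Rightarrow> 'v \<Rightarrow> ('v, 'f, 's) ty
                      \<Rightarrow> ('v, 'f, 's, 'p) form \<Rightarrow> ('v, 'f, 's, 'p) form" where
  "fsub_p fr \<Gamma> x A \<phi> = fsub fr (\<Gamma> @ [(x, A)]) \<Gamma> (map Var (OV \<Gamma>)) \<phi>"

type_synonym ('v, 'f, 's, 'p) sequent =
  "('v, 'f, 's) ctx \<times> ('v, 'f, 's, 'p) form \<times> ('v, 'f, 's, 'p) form"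

definition is_theory :: "('v set \<Rightarrow> 'v set) \<Rightarrow> ('v, 'f, 's) sig \<Rightarrow> ('v, 'f, 's, 'p) psig
                         \<Rightarrow> ('v, 'f, 's, 'p) sequent set \<Rightarrow> bool" where
  "is_theory phi Sg Pi T \<longleftrightarrow>
     (\<forall>(\<Gamma>, \<phi>, \<psi>) \<in> T. (\<Gamma>, \<phi>) \<in> Form phi Sg Pi \<and> (\<Gamma>, \<psi>) \<in> Form phi Sg Pi)"

inductive_set Thm :: "('v set \<Rightarrow> 'v set) \<Rightarrow> ('v set \<Rightarrow> 'v) \<Rightarrow> ('v, 'f, 's) sig
                       \<Rightarrow> ('v, 'f, 's, 'p) psig \<Rightarrow> ('v, 'f, 's, 'p) sequent set
                       \<Rightarrow> ('v, 'f, 's, 'p) sequent set"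
  for phi fr Sg Pi T where
  T_ax: "s \<in> T \<Longrightarrow> s \<in> Thm phi fr Sg Pi T"
| T_id: "(\<Gamma>, \<phi>) \<in> Form phi Sg Pi \<Longrightarrow> (\<Gamma>, \<phi>, \<phi>) \<in> Thm phi fr Sg Pi T"
| T_cut: "(\<Gamma>, \<phi>, \<psi>) \<in> Thm phi fr Sg Pi T \<Longrightarrow> (\<Gamma>, \<psi>, \<theta>) \<in> Thm phi fr Sg Pi T
           \<Longrightarrow> (\<Gamma>, \<phi>, \<theta>) \<in> Thm phi fr Sg Pi T"
| T_conjE1: "(\<Gamma>, \<theta>) \<in> Form phi Sg Pi \<Longrightarrow> (\<Gamma>, \<psi>) \<in> Form phi Sg Pi
           \<Longrightarrow> (\<Gamma>, FConj \<theta> \<psi>, \<theta>) \<in> Thm phi fr Sg Pi T"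
| T_conjE2: "(\<Gamma>, \<theta>) \<in> Form phi Sg Pi \<Longrightarrow> (\<Gamma>, \<psi>) \<in> Form phi Sg Pi
           \<Longrightarrow> (\<Gamma>, FConj \<theta> \<psi>, \<psi>) \<in> Thm phi fr Sg Pi T"
| T_conjI: "(\<Gamma>, \<phi>, \<theta>) \<in> Thm phi fr Sg Pi T \<Longrightarrow> (\<Gamma>, \<phi>, \<psi>) \<in> Thm phi fr Sg Pi T
           \<Longrightarrow> (\<Gamma>, \<phi>, FConj \<theta> \<psi>) \<in> Thm phi fr Sg Pi T"
| T_top: "(\<Gamma>, \<phi>) \<in> Form phi Sg Pi \<Longrightarrow> (\<Gamma>, \<phi>, FTop) \<in> Thm phi fr Sg Pi T"
| T_disjI1: "(\<Gamma>, \<theta>) \<in> Form phi Sg Pi \<Longrightarrow> (\<Gamma>, \<psi>) \<in> Form phi Sg Pi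
           \<Longrightarrow> (\<Gamma>, \<theta>, FDisj \<theta> \<psi>) \<in> Thm phi fr Sg Pi T"
| T_disjI2: "(\<Gamma>, \<theta>) \<in> Form phi Sg Pi \<Longrightarrow> (\<Gamma>, \<psi>) \<in> Form phi Sg Pi
           \<Longrightarrow> (\<Gamma>, \<psi>, FDisj \<theta> \<psi>) \<in> Thm phi fr Sg Pi T"
| T_disjE: "(\<Gamma>, \<theta>, \<phi>) \<in> Thm phi fr Sg Pi T \<Longrightarrow> (\<Gamma>, \<psi>, \<phi>) \<in> Thm phi fr Sg Pi T
           \<Longrightarrow> (\<Gamma>, FDisj \<theta> \<psi>, \<phi>) \<in> Thm phi fr Sg Pi T"
| T_bot: "(\<Gamma>, \<phi>) \<in> Form phi Sg Pi \<Longrightarrow> (\<Gamma>, FBot, \<phi>) \<in> Thm phi fr Sg Pi T"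
| T_impI: "(\<Gamma>, FConj \<theta> \<psi>, \<phi>) \<in> Thm phi fr Sg Pi T
           \<Longrightarrow> (\<Gamma>, \<theta>, FImp \<psi> \<phi>) \<in> Thm phi fr Sg Pi T"
| T_impE: "(\<Gamma>, \<theta>, FImp \<psi> \<phi>) \<in> Thm phi fr Sg Pi T
           \<Longrightarrow> (\<Gamma>, FConj \<theta> \<psi>, \<phi>) \<in> Thm phi fr Sg Pi T"
| T_allI: "(\<Gamma>, \<phi>) \<in> Form phi Sg Pi \<Longrightarrow> JCtx (\<Gamma> @ [(x, A)]) \<in> Jdg phi Sg
           \<Longrightarrow> (\<Gamma> @ [(x, A)], fsub_p fr \<Gamma> x A \<phi>, \<psi>) \<in> Thm phi fr Sg Pi T
           \<Longrightarrow> (\<Gamma>, \<phi>, FAll x A \<psi>) \<in> Thm phi fr Sg Pi T"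
| T_allE: "(\<Gamma>, \<phi>, FAll x A \<psi>) \<in> Thm phi fr Sg Pi T \<Longrightarrow> JCtx (\<Gamma> @ [(x, A)]) \<in> Jdg phi Sg
           \<Longrightarrow> (\<Gamma> @ [(x, A)], fsub_p fr \<Gamma> x A \<phi>, \<psi>) \<in> Thm phi fr Sg Pi T"
| T_exE: "(\<Gamma>, \<phi>) \<in> Form phi Sg Pi \<Longrightarrow> JCtx (\<Gamma> @ [(x, A)]) \<in> Jdg phi Sg
           \<Longrightarrow> (\<Gamma> @ [(x, A)], \<psi>, fsub_p fr \<Gamma> x A \<phi>) \<in> Thm phi fr Sg Pi T
           \<Longrightarrow> (\<Gamma>, FEx x A \<psi>, \<phi>) \<in> Thm phi fr Sg Pi T"
| T_exI: "(\<Gamma>, FEx x A \<psi>, \<phi>) \<in> Thm phi fr Sg Pi T \<Longrightarrow> JCtx (\<Gamma> @ [(x, A)]) \<in> Jdg phi Sg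
           \<Longrightarrow> (\<Gamma> @ [(x, A)], \<psi>, fsub_p fr \<Gamma> x A \<phi>) \<in> Thm phi fr Sg Pi T"
| T_subst: "(\<Gamma>, \<phi>, \<psi>) \<in> Thm phi fr Sg Pi T \<Longrightarrow> morph (Jdg phi Sg) \<Delta> \<Gamma> as
           \<Longrightarrow> (\<Delta>, fsub fr \<Delta> \<Gamma> as \<phi>, fsub fr \<Delta> \<Gamma> as \<psi>) \<in> Thm phi fr Sg Pi T"

section \<open>Categories with families\<close>

text \<open>A cwf, with the (dependently sorted) operations encoded as total functions that are
  only constrained on their intended domains.\<close>
record ('o, 'm, 't, 'e) cwf =
  Ob :: "'o set"
  Hom :: "'o \<Rightarrow> 'o \<Rightarrow> 'm set"
  cmp :: "'m \<Rightarrow> 'm \<Rightarrow> 'm"      \<comment> \<open>cmp g f = g \<circ> f\<close>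
  idm :: "'o \<Rightarrow> 'm"
  trm :: "'o"
  Tys :: "'o \<Rightarrow> 't set"
  tsb :: "'t \<Rightarrow> 'm \<Rightarrow> 't"
  Tms :: "'o \<Rightarrow> 't \<Rightarrow> 'e set"
  esb :: "'e \<Rightarrow> 'm \<Rightarrow> 'e"
  ext :: "'o \<Rightarrow> 't \<Rightarrow> 'o"
  prj :: "'o \<Rightarrow> 't \<Rightarrow> 'm"
  vr  :: "'o \<Rightarrow> 't \<Rightarrow> 'e"
  pair :: "'o \<Rightarrow> 't \<Rightarrow> 'm \<Rightarrow> 'e \<Rightarrow> 'm"

definition is_terminal :: "('o, 'm, 't, 'e) cwf \<Rightarrow> 'o \<Rightarrow> bool" where
  "is_terminal C T \<longleftrightarrow> T \<in> Ob C \<and> (\<forall>X \<in> Ob C. \<exists>!f. f \<in> Hom C X T)"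

definition is_cwf :: "('o, 'm, 't, 'e) cwf \<Rightarrow> bool" where
  "is_cwf C \<longleftrightarrow>
    \<comment> \<open>category\<close>
    (\<forall>\<Gamma> \<in> Ob C. idm C \<Gamma> \<in> Hom C \<Gamma> \<Gamma>) \<and>
    (\<forall>X \<in> Ob C. \<forall>Y \<in> Ob C. \<forall>Z \<in> Ob C. \<forall>f \<in> Hom C X Y. \<forall>g \<in> Hom C Y Z.
        cmp C g f \<in> Hom C X Z) \<and>
    (\<forall>X \<in> Ob C. \<forall>Y \<in> Ob C. \<forall>f \<in> Hom C X Y.
        cmp C (idm C Y) f = f \<and> cmp C f (idm C X) = f) \<and>
    (\<forall>W \<in> Ob C. \<forall>X \<in> Ob C. \<forall>Y \<in> Ob C. \<forall>Z \<in> Ob C.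
       \<forall>f \<in> Hom C W X. \<forall>g \<in> Hom C X Y. \<forall>h \<in> Hom C Y Z.
        cmp C h (cmp C g f) = cmp C (cmp C h g) f) \<and>
    \<comment> \<open>terminal object\<close>
    is_terminal C (trm C) \<and>
    \<comment> \<open>types\<close>
    (\<forall>\<Gamma> \<in> Ob C. \<forall>\<Delta> \<in> Ob C. \<forall>A \<in> Tys C \<Gamma>. \<forall>f \<in> Hom C \<Delta> \<Gamma>. tsb C A f \<in> Tys C \<Delta>) \<and>
    (\<forall>\<Gamma> \<in> Ob C. \<forall>A \<in> Tys C \<Gamma>. tsb C A (idm C \<Gamma>) = A) \<and>
    (\<forall>\<Gamma> \<in> Ob C. \<forall>\<Delta> \<in> Ob C. \<forall>\<Theta> \<in> Ob C. \<forall>A \<in> Tys C \<Gamma>. \<forall>f \<in> Hom C \<Delta> \<Gamma>. \<forall>g \<in> Hom C \<Theta> \<Delta>.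
        tsb C A (cmp C f g) = tsb C (tsb C A f) g) \<and>
    \<comment> \<open>terms\<close>
    (\<forall>\<Gamma> \<in> Ob C. \<forall>\<Delta> \<in> Ob C. \<forall>A \<in> Tys C \<Gamma>. \<forall>a \<in> Tms C \<Gamma> A. \<forall>f \<in> Hom C \<Delta> \<Gamma>.
        esb C a f \<in> Tms C \<Delta> (tsb C A f)) \<and>
    (\<forall>\<Gamma> \<in> Ob C. \<forall>A \<in> Tys C \<Gamma>. \<forall>a \<in> Tms C \<Gamma> A. esb C a (idm C \<Gamma>) = a) \<and>
    (\<forall>\<Gamma> \<in> Ob C. \<forall>\<Delta> \<in> Ob C. \<forall>\<Theta> \<in> Ob C. \<forall>A \<in> Tys C \<Gamma>. \<forall>a \<in> Tms C \<Gamma> A.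
       \<forall>f \<in> Hom C \<Delta> \<Gamma>. \<forall>g \<in> Hom C \<Theta> \<Delta>.
        esb C a (cmp C f g) = esb C (esb C a f) g) \<and>
    \<comment> \<open>context comprehension\<close>
    (\<forall>\<Gamma> \<in> Ob C. \<forall>A \<in> Tys C \<Gamma>.
        ext C \<Gamma> A \<in> Ob C \<and> prj C \<Gamma> A \<in> Hom C (ext C \<Gamma> A) \<Gamma> \<and>
        vr C \<Gamma> A \<in> Tms C (ext C \<Gamma> A) (tsb C A (prj C \<Gamma> A))) \<and>
    (\<forall>\<Gamma> \<in> Ob C. \<forall>\<Delta> \<in> Ob C. \<forall>A \<in> Tys C \<Gamma>. \<forall>f \<in> Hom C \<Delta> \<Gamma>. \<forall>a \<in> Tms C \<Delta> (tsb C A f).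
        pair C \<Gamma> A f a \<in> Hom C \<Delta> (ext C \<Gamma> A) \<and>
        cmp C (prj C \<Gamma> A) (pair C \<Gamma> A f a) = f \<and>
        esb C (vr C \<Gamma> A) (pair C \<Gamma> A f a) = a) \<and>
    (\<forall>\<Gamma> \<in> Ob C. \<forall>\<Delta> \<in> Ob C. \<forall>A \<in> Tys C \<Gamma>. \<forall>h \<in> Hom C \<Delta> (ext C \<Gamma> A).
        pair C \<Gamma> A (cmp C (prj C \<Gamma> A) h) (esb C (vr C \<Gamma> A) h) = h) \<and>
    (\<forall>\<Gamma> \<in> Ob C. \<forall>\<Delta> \<in> Ob C. \<forall>\<Theta> \<in> Ob C. \<forall>A \<in> Tys C \<Gamma>. \<forall>f \<in> Hom C \<Delta> \<Gamma>.
       \<forall>a \<in> Tms C \<Delta> (tsb C A f). \<forall>g \<in> Hom C \<Theta> \<Delta>.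
        cmp C (pair C \<Gamma> A f a) g = pair C \<Gamma> A (cmp C f g) (esb C a g))"

text \<open>The morphism  f.A : \<Delta>.A{f} \<rightarrow> \<Gamma>.A  for  f : \<Delta> \<rightarrow> \<Gamma>.\<close>
definition qmor :: "('o, 'm, 't, 'e) cwf \<Rightarrow> 'o \<Rightarrow> 'o \<Rightarrow> 't \<Rightarrow> 'm \<Rightarrow> 'm" where
  "qmor C \<Delta> \<Gamma> A f =
     pair C \<Gamma> A (cmp C f (prj C \<Delta> (tsb C A f))) (vr C \<Delta> (tsb C A f))"

record ('o, 'm, 't, 'e, 'o2, 'm2, 't2, 'e2) cwf_mor =
  Fo :: "'o \<Rightarrow> 'o2"
  Fm :: "'m \<Rightarrow> 'm2"
  Fsg :: "'o \<Rightarrow> 't \<Rightarrow> 't2"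
  Fth :: "'o \<Rightarrow> 't \<Rightarrow> 'e \<Rightarrow> 'e2"

definition is_cwf_mor :: "('o, 'm, 't, 'e) cwf \<Rightarrow> ('o2, 'm2, 't2, 'e2) cwf
                          \<Rightarrow> ('o, 'm, 't, 'e, 'o2, 'm2, 't2, 'e2) cwf_mor \<Rightarrow> bool" where
  "is_cwf_mor C C' F \<longleftrightarrow>
    \<comment> \<open>functor\<close>
    (\<forall>\<Gamma> \<in> Ob C. Fo F \<Gamma> \<in> Ob C') \<and>
    (\<forall>\<Gamma> \<in> Ob C. \<forall>\<Delta> \<in> Ob C. \<forall>f \<in> Hom C \<Delta> \<Gamma>. Fm F f \<in> Hom C' (Fo F \<Delta>) (Fo F \<Gamma>)) \<and>
    (\<forall>\<Gamma> \<in> Ob C. Fm F (idm C \<Gamma>) = idm C' (Fo F \<Gamma>)) \<and>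
    (\<forall>X \<in> Ob C. \<forall>Y \<in> Ob C. \<forall>Z \<in> Ob C. \<forall>f \<in> Hom C X Y. \<forall>g \<in> Hom C Y Z.
        Fm F (cmp C g f) = cmp C' (Fm F g) (Fm F f)) \<and>
    \<comment> \<open>preserves the terminal object\<close>
    is_terminal C' (Fo F (trm C)) \<and>
    \<comment> \<open>types\<close>
    (\<forall>\<Gamma> \<in> Ob C. \<forall>A \<in> Tys C \<Gamma>. Fsg F \<Gamma> A \<in> Tys C' (Fo F \<Gamma>)) \<and>
    (\<forall>\<Gamma> \<in> Ob C. \<forall>\<Delta> \<in> Ob C. \<forall>A \<in> Tys C \<Gamma>. \<forall>f \<in> Hom C \<Delta> \<Gamma>.
        Fsg F \<Delta> (tsb C A f) = tsb C' (Fsg F \<Gamma> A) (Fm F f)) \<and>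
    (\<forall>\<Gamma> \<in> Ob C. \<forall>A \<in> Tys C \<Gamma>.
        Fo F (ext C \<Gamma> A) = ext C' (Fo F \<Gamma>) (Fsg F \<Gamma> A) \<and>
        Fm F (prj C \<Gamma> A) = prj C' (Fo F \<Gamma>) (Fsg F \<Gamma> A)) \<and>
    \<comment> \<open>terms\<close>
    (\<forall>\<Gamma> \<in> Ob C. \<forall>A \<in> Tys C \<Gamma>. \<forall>a \<in> Tms C \<Gamma> A. Fth F \<Gamma> A a \<in> Tms C' (Fo F \<Gamma>) (Fsg F \<Gamma> A)) \<and>
    (\<forall>\<Gamma> \<in> Ob C. \<forall>\<Delta> \<in> Ob C. \<forall>A \<in> Tys C \<Gamma>. \<forall>a \<in> Tms C \<Gamma> A. \<forall>f \<in> Hom C \<Delta> \<Gamma>.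
        Fth F \<Delta> (tsb C A f) (esb C a f) = esb C' (Fth F \<Gamma> A a) (Fm F f)) \<and>
    (\<forall>\<Gamma> \<in> Ob C. \<forall>A \<in> Tys C \<Gamma>.
        Fth F (ext C \<Gamma> A) (tsb C A (prj C \<Gamma> A)) (vr C \<Gamma> A) = vr C' (Fo F \<Gamma>) (Fsg F \<Gamma> A)) \<and>
    (\<forall>\<Gamma> \<in> Ob C. \<forall>\<Delta> \<in> Ob C. \<forall>A \<in> Tys C \<Gamma>. \<forall>f \<in> Hom C \<Delta> \<Gamma>. \<forall>a \<in> Tms C \<Delta> (tsb C A f).
        Fm F (pair C \<Gamma> A f a) = pair C' (Fo F \<Gamma>) (Fsg F \<Gamma> A) (Fm F f) (Fth F \<Delta> (tsb C A f) a))"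

section \<open>Heyting prealgebras and hyperdoctrines\<close>

record 'h heyt =
  hcar :: "'h set"
  hle :: "'h \<Rightarrow> 'h \<Rightarrow> bool"
  htop :: 'h
  hbot :: 'h
  hmeet :: "'h \<Rightarrow> 'h \<Rightarrow> 'h"
  hjoin :: "'h \<Rightarrow> 'h \<Rightarrow> 'h"
  himp :: "'h \<Rightarrow> 'h \<Rightarrow> 'h"

definition is_heyt :: "'h heyt \<Rightarrow> bool" where
  "is_heyt H \<longleftrightarrow>
    (\<forall>x \<in> hcar H. hle H x x) \<and>
    (\<forall>x \<in> hcar H. \<forall>y \<in> hcar H. \<forall>z \<in> hcar H. hle H x y \<longrightarrow> hle H y z \<longrightarrow> hle H x z) \<and>
    htop H \<in> hcar H \<and> hbot H \<in> hcar H \<and>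
    (\<forall>x \<in> hcar H. \<forall>y \<in> hcar H. hmeet H x y \<in> hcar H \<and> hjoin H x y \<in> hcar H \<and>
        himp H x y \<in> hcar H) \<and>
    (\<forall>x \<in> hcar H. hle H (hbot H) x \<and> hle H x (htop H)) \<and>
    (\<forall>x \<in> hcar H. \<forall>y \<in> hcar H. \<forall>z \<in> hcar H.
        (hle H z (hmeet H x y) \<longleftrightarrow> hle H z x \<and> hle H z y) \<and>
        (hle H (hjoin H x y) z \<longleftrightarrow> hle H x z \<and> hle H y z) \<and>
        (hle H z (himp H x y) \<longleftrightarrow> hle H (hmeet H z x) y))"

definition heyt_hom :: "'h heyt \<Rightarrow> 'k heyt \<Rightarrow> ('h \<Rightarrow> 'k) \<Rightarrow> bool" where
  "heyt_hom H K g \<longleftrightarrow>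
    (\<forall>x \<in> hcar H. g x \<in> hcar K) \<and>
    (\<forall>x \<in> hcar H. \<forall>y \<in> hcar H. hle H x y \<longrightarrow> hle K (g x) (g y)) \<and>
    g (htop H) = htop K \<and> g (hbot H) = hbot K \<and>
    (\<forall>x \<in> hcar H. \<forall>y \<in> hcar H.
        g (hmeet H x y) = hmeet K (g x) (g y) \<and>
        g (hjoin H x y) = hjoin K (g x) (g y) \<and>
        g (himp H x y) = himp K (g x) (g y))"

record ('o, 'm, 't, 'h) hdoc =
  Pr :: "'o \<Rightarrow> 'h heyt"
  rst :: "'m \<Rightarrow> 'h \<Rightarrow> 'h"
  hall :: "'o \<Rightarrow> 't \<Rightarrow> 'h \<Rightarrow> 'h"
  hex :: "'o \<Rightarrow> 't \<Rightarrow> 'h \<Rightarrow> 'h"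

definition is_hdoc :: "('o, 'm, 't, 'e) cwf \<Rightarrow> ('o, 'm, 't, 'h) hdoc \<Rightarrow> bool" where
  "is_hdoc C D \<longleftrightarrow>
    (\<forall>\<Gamma> \<in> Ob C. is_heyt (Pr D \<Gamma>)) \<and>
    \<comment> \<open>functor C^op \<rightarrow> Heyting\<close>
    (\<forall>\<Gamma> \<in> Ob C. \<forall>\<Delta> \<in> Ob C. \<forall>f \<in> Hom C \<Delta> \<Gamma>. heyt_hom (Pr D \<Gamma>) (Pr D \<Delta>) (rst D f)) \<and>
    (\<forall>\<Gamma> \<in> Ob C. \<forall>R \<in> hcar (Pr D \<Gamma>). rst D (idm C \<Gamma>) R = R) \<and>
    (\<forall>X \<in> Ob C. \<forall>Y \<in> Ob C. \<forall>Z \<in> Ob C. \<forall>f \<in> Hom C X Y. \<forall>g \<in> Hom C Y Z.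
       \<forall>R \<in> hcar (Pr D Z). rst D (cmp C g f) R = rst D f (rst D g R)) \<and>
    \<comment> \<open>quantifiers\<close>
    (\<forall>\<Gamma> \<in> Ob C. \<forall>S \<in> Tys C \<Gamma>.
       (\<forall>R \<in> hcar (Pr D (ext C \<Gamma> S)). hall D \<Gamma> S R \<in> hcar (Pr D \<Gamma>) \<and> hex D \<Gamma> S R \<in> hcar (Pr D \<Gamma>)) \<and>
       (\<forall>R \<in> hcar (Pr D (ext C \<Gamma> S)). \<forall>R' \<in> hcar (Pr D (ext C \<Gamma> S)).
          hle (Pr D (ext C \<Gamma> S)) R R' \<longrightarrow>
            hle (Pr D \<Gamma>) (hall D \<Gamma> S R) (hall D \<Gamma> S R') \<and>
            hle (Pr D \<Gamma>) (hex D \<Gamma> S R) (hex D \<Gamma> S R')) \<and>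
       (\<forall>Q \<in> hcar (Pr D \<Gamma>). \<forall>R \<in> hcar (Pr D (ext C \<Gamma> S)).
          (hle (Pr D \<Gamma>) Q (hall D \<Gamma> S R) \<longleftrightarrow>
             hle (Pr D (ext C \<Gamma> S)) (rst D (prj C \<Gamma> S) Q) R) \<and>
          (hle (Pr D \<Gamma>) (hex D \<Gamma> S R) Q \<longleftrightarrow>
             hle (Pr D (ext C \<Gamma> S)) R (rst D (prj C \<Gamma> S) Q))) \<and>
       \<comment> \<open>Beck-Chevalley\<close>
       (\<forall>\<Delta> \<in> Ob C. \<forall>f \<in> Hom C \<Delta> \<Gamma>. \<forall>R \<in> hcar (Pr D (ext C \<Gamma> S)).
          rst D f (hall D \<Gamma> S R) = hall D \<Delta> (tsb C S f) (rst D (qmor C \<Delta> \<Gamma> S f) R) \<and>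
          rst D f (hex D \<Gamma> S R) = hex D \<Delta> (tsb C S f) (rst D (qmor C \<Delta> \<Gamma> S f) R)))"

definition is_hdoc_mor :: "('o, 'm, 't, 'e) cwf \<Rightarrow> ('o2, 'm2, 't2, 'e2) cwf
    \<Rightarrow> ('o, 'm, 't, 'e, 'o2, 'm2, 't2, 'e2) cwf_mor
    \<Rightarrow> ('o, 'm, 't, 'h) hdoc \<Rightarrow> ('o2, 'm2, 't2, 'h2) hdoc \<Rightarrow> ('o \<Rightarrow> 'h \<Rightarrow> 'h2) \<Rightarrow> bool" where
  "is_hdoc_mor C C' F H H' G \<longleftrightarrow>
    (\<forall>\<Gamma> \<in> Ob C. heyt_hom (Pr H \<Gamma>) (Pr H' (Fo F \<Gamma>)) (G \<Gamma>)) \<and>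
    (\<forall>\<Gamma> \<in> Ob C. \<forall>\<Delta> \<in> Ob C. \<forall>f \<in> Hom C \<Delta> \<Gamma>. \<forall>R \<in> hcar (Pr H \<Gamma>).
        G \<Delta> (rst H f R) = rst H' (Fm F f) (G \<Gamma> R)) \<and>
    (\<forall>\<Gamma> \<in> Ob C. \<forall>S \<in> Tys C \<Gamma>. \<forall>R \<in> hcar (Pr H (ext C \<Gamma> S)).
        G \<Gamma> (hall H \<Gamma> S R) = hall H' (Fo F \<Gamma>) (Fsg F \<Gamma> S) (G (ext C \<Gamma> S) R) \<and>
        G \<Gamma> (hex H \<Gamma> S R) = hex H' (Fo F \<Gamma>) (Fsg F \<Gamma> S) (G (ext C \<Gamma> S) R))"

section \<open>The term-model cwf F_\<Sigma>\<close>

type_synonym ('v, 'f, 's) fmor = "('v, 'f, 's) ctx \<times> ('v, 'f, 's) ctx \<times> ('v, 'f) tm list"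
type_synonym ('v, 'f, 's) fty = "('v, 'f, 's) ctx \<times> ('v, 'f, 's) ty"
type_synonym ('v, 'f, 's) ftm = "('v, 'f, 's) fty \<times> ('v, 'f) tm"

definition fresh :: "('v set \<Rightarrow> 'v) \<Rightarrow> ('v, 'f, 's) ctx \<Rightarrow> 'v" where
  "fresh fr \<Gamma> = fr (vars_ctx \<Gamma>)"

definition FSig :: "('v set \<Rightarrow> 'v set) \<Rightarrow> ('v set \<Rightarrow> 'v) \<Rightarrow> ('v, 'f, 's) sig
    \<Rightarrow> (('v, 'f, 's) ctx, ('v, 'f, 's) fmor, ('v, 'f, 's) fty, ('v, 'f, 's) ftm) cwf" where
  "FSig phi fr Sg =
    \<lparr> Ob = {\<Gamma>. JCtx \<Gamma> \<in> Jdg phi Sg},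
      Hom = (\<lambda>\<Delta> \<Gamma>. {(\<Delta>', \<Gamma>', as). \<Delta>' = \<Delta> \<and> \<Gamma>' = \<Gamma> \<and> morph (Jdg phi Sg) \<Delta> \<Gamma> as}),
      cmp = (\<lambda>(\<Theta>, \<Gamma>, as) (\<Delta>, \<Theta>', bs). (\<Delta>, \<Gamma>, map (subst_tm (sb (OV \<Theta>) bs)) as)),
      idm = (\<lambda>\<Gamma>. (\<Gamma>, \<Gamma>, map Var (OV \<Gamma>))),
      trm = [],
      Tys = (\<lambda>\<Gamma>. {(\<Gamma>', A). \<Gamma>' = \<Gamma> \<and> JType \<Gamma> A \<in> Jdg phi Sg}),
      tsb = (\<lambda>(\<Gamma>, A) (\<Delta>, \<Gamma>', as). (\<Delta>, subst_ty (sb (OV \<Gamma>) as) A)),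
      Tms = (\<lambda>\<Gamma> T. {(T', a). T' = T \<and> fst T = \<Gamma> \<and> JTm \<Gamma> a (snd T) \<in> Jdg phi Sg}),
      esb = (\<lambda>((\<Gamma>, A), a) (\<Delta>, \<Gamma>', as).
               ((\<Delta>, subst_ty (sb (OV \<Gamma>) as) A), subst_tm (sb (OV \<Gamma>) as) a)),
      ext = (\<lambda>\<Gamma> T. \<Gamma> @ [(fresh fr \<Gamma>, snd T)]),
      prj = (\<lambda>\<Gamma> T. (\<Gamma> @ [(fresh fr \<Gamma>, snd T)], \<Gamma>, map Var (OV \<Gamma>))),
      vr = (\<lambda>\<Gamma> T. ((\<Gamma> @ [(fresh fr \<Gamma>, snd T)], snd T), Var (fresh fr \<Gamma>))),
      pair = (\<lambda>\<Gamma> T (\<Delta>, \<Gamma>', ss) (T', b). (\<Delta>, \<Gamma> @ [(fresh fr \<Gamma>, snd T)], ss @ [b])) \<rparr>"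

section \<open>The Lindenbaum-Tarski hyperdoctrine\<close>

type_synonym ('v, 'f, 's, 'p) lt = "('v, 'f, 's) ctx \<times> ('v, 'f, 's, 'p) form"

definition LT :: "('v set \<Rightarrow> 'v set) \<Rightarrow> ('v set \<Rightarrow> 'v) \<Rightarrow> ('v, 'f, 's) sig
    \<Rightarrow> ('v, 'f, 's, 'p) psig \<Rightarrow> ('v, 'f, 's, 'p) sequent set
    \<Rightarrow> (('v, 'f, 's) ctx, ('v, 'f, 's) fmor, ('v, 'f, 's) fty, ('v, 'f, 's, 'p) lt) hdoc" where
  "LT phi fr Sg Pi T =
    \<lparr> Pr = (\<lambda>\<Gamma>. \<lparr> hcar = {(\<Gamma>', \<phi>). \<Gamma>' = \<Gamma> \<and> (\<Gamma>, \<phi>) \<in> Form phi Sg Pi},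
                   hle = (\<lambda>P Q. (\<Gamma>, snd P, snd Q) \<in> Thm phi fr Sg Pi T),
                   htop = (\<Gamma>, FTop),
                   hbot = (\<Gamma>, FBot),
                   hmeet = (\<lambda>P Q. (\<Gamma>, FConj (snd P) (snd Q))),
                   hjoin = (\<lambda>P Q. (\<Gamma>, FDisj (snd P) (snd Q))),
                   himp = (\<lambda>P Q. (\<Gamma>, FImp (snd P) (snd Q))) \<rparr>),
      rst = (\<lambda>(\<Delta>, \<Gamma>, as) P. (\<Delta>, fsub fr \<Delta> \<Gamma> as (snd P))),
      hall = (\<lambda>\<Gamma> T P. (\<Gamma>, FAll (fst (last (fst P))) (snd T) (snd P))),
      hex = (\<lambda>\<Gamma> T P. (\<Gamma>, FEx (fst (last (fst P))) (snd T) (snd P))) \<rparr>"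

end

theory Submission
  imports Defs
begin

text \<open>Every formula of the Lindenbaum-Tarski hyperdoctrine is built from generic atoms
  R(OV \<Gamma>) by the Heyting operations, the quantifiers and substitution: on standard
  form, an atom R(as) over \<Delta> is the generic atom restricted along as : \<Delta> \<rightarrow> \<Gamma>, and by the
  de Bruijn property the context \<Gamma>, x:A under a quantifier is the cwf extension of \<Gamma> by A.
  Hyperdoctrine morphisms preserve all these operations, so two of them agreeing on the
  generic atoms agree everywhere, by induction on the formation of formulas.\<close>

lemma heyt_hom_agree_const:
  assumes "heyt_hom H K g" "heyt_hom H K g'"
  shows "g (htop H) = g' (htop H)" "g (hbot H) = g' (hbot H)"
  using assms unfolding heyt_hom_def by auto

lemma heyt_hom_agree_ops:
  assumes "heyt_hom H K g" "heyt_hom H K g'" "x \<in> hcar H" "y \<in> hcar H"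
    and "g x = g' x" "g y = g' y"
  shows "g (hmeet H x y) = g' (hmeet H x y)"
    "g (hjoin H x y) = g' (hjoin H x y)"
    "g (himp H x y) = g' (himp H x y)"
  using assms unfolding heyt_hom_def by auto

lemma is_hdoc_mor_heyt_hom:
  "is_hdoc_mor C C' F H H' G \<Longrightarrow> \<Gamma> \<in> Ob C \<Longrightarrow> heyt_hom (Pr H \<Gamma>) (Pr H' (Fo F \<Gamma>)) (G \<Gamma>)"
  unfolding is_hdoc_mor_def by blast

lemma hdoc_mor_agree_rst:
  assumes "is_hdoc_mor C C' F H H' G" "is_hdoc_mor C C' F H H' G'"
    and "\<Gamma> \<in> Ob C" "\<Delta> \<in> Ob C" "f \<in> Hom C \<Delta> \<Gamma>" "R \<in> hcar (Pr H \<Gamma>)"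
    and "G \<Gamma> R = G' \<Gamma> R"
  shows "G \<Delta> (rst H f R) = G' \<Delta> (rst H f R)"
  using assms unfolding is_hdoc_mor_def by metis

lemma hdoc_mor_agree_quant:
  assumes "is_hdoc_mor C C' F H H' G" "is_hdoc_mor C C' F H H' G'"
    and "\<Gamma> \<in> Ob C" "S \<in> Tys C \<Gamma>" "R \<in> hcar (Pr H (ext C \<Gamma> S))"
    and "G (ext C \<Gamma> S) R = G' (ext C \<Gamma> S) R"
  shows "G \<Gamma> (hall H \<Gamma> S R) = G' \<Gamma> (hall H \<Gamma> S R)"
    "G \<Gamma> (hex H \<Gamma> S R) = G' \<Gamma> (hex H \<Gamma> S R)"
  using assms unfolding is_hdoc_mor_def by metis+

lemma finite_vars_tm: "finite (vars_tm t)"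
  by (induction t) auto

lemma finite_vars_ctx: "finite (vars_ctx \<Gamma>)"
proof -
  have "finite (vars_ty A)" for A :: "('a, 'b, 'c) ty"
    by (cases A) (auto simp: finite_vars_tm)
  then show ?thesis
    unfolding vars_ctx_def by auto
qed

lemma JCtx_snocD:
  "JCtx (\<Gamma> @ [(x, A)]) \<in> Jdg phi Sg \<Longrightarrow> JCtx \<Gamma> \<in> Jdg phi Sg \<and> x \<in> phi (vars_ctx \<Gamma>)"
  by (erule Jdg.cases) auto

lemma Jdg_distinct_OV:
  assumes "var_system phi fr" "JCtx \<Gamma> \<in> Jdg phi Sg"
  shows "distinct (OV \<Gamma>)"
proof -
  have "j \<in> Jdg phi Sg \<Longrightarrow> (\<forall>\<Gamma>. j = JCtx \<Gamma> \<longrightarrow> distinct (OV \<Gamma>))" for j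
  proof (induction rule: Jdg.induct)
    case (R2 \<Gamma> A x)
    have "x \<notin> vars_ctx \<Gamma>"
      using assms(1) R2.hyps(3) finite_vars_ctx unfolding var_system_def by blast
    moreover have "set (OV \<Gamma>) \<subseteq> vars_ctx \<Gamma>"
      unfolding OV_def vars_ctx_def by auto
    ultimately show ?case
      using R2.IH(1) by (auto simp: OV_def)
  qed (auto simp: OV_def)
  then show ?thesis
    using assms(2) by blast
qed

lemma Form_ctx: "(\<Gamma>, \<phi>) \<in> Form phi Sg Pi \<Longrightarrow> JCtx \<Gamma> \<in> Jdg phi Sg"
  by (induction rule: Form.induct) (auto simp: morph_def dest: JCtx_snocD)

lemma sb_Var: "sb xs (map Var xs) = Var"
  by (rule ext) (auto simp: sb_def map_of_zip_map split: option.splits)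

lemma subst_tm_Var: "subst_tm Var t = t"
  by (induction t) (auto simp: map_idI)

lemma subst_ty_Var: "subst_ty Var A = A"
  by (cases A) (auto simp: subst_tm_Var map_idI)

lemma subst_tm_sb_OV:
  assumes "distinct (OV \<Gamma>)" "length as = length \<Gamma>"
  shows "map (subst_tm (sb (OV \<Gamma>) as)) (map Var (OV \<Gamma>)) = as"
proof (rule nth_equalityI)
  fix i assume "i < length (map (subst_tm (sb (OV \<Gamma>) as)) (map Var (OV \<Gamma>)))"
  then have i: "i < length as"
    using assms by (simp add: OV_def)
  have "map_of (zip (OV \<Gamma>) as) (OV \<Gamma> ! i) = Some (as ! i)"
    using assms i by (intro map_of_zip_nth) (auto simp: OV_def)
  then show "map (subst_tm (sb (OV \<Gamma>) as)) (map Var (OV \<Gamma>)) ! i = as ! i"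
    using i assms by (simp add: sb_def OV_def)
qed (use assms in \<open>simp add: OV_def\<close>)

lemma morph_id: "JCtx \<Gamma> \<in> Jdg phi Sg \<Longrightarrow> morph (Jdg phi Sg) \<Gamma> \<Gamma> (map Var (OV \<Gamma>))"
  unfolding morph_def
proof (intro conjI allI impI)
  fix k assume "JCtx \<Gamma> \<in> Jdg phi Sg" "k < length \<Gamma>"
  then have "JTm \<Gamma> (Var (fst (\<Gamma> ! k))) (snd (\<Gamma> ! k)) \<in> Jdg phi Sg"
    by (rule R3)
  then show "JTm \<Gamma> (map Var (OV \<Gamma>) ! k)
      (subst_ty (sb (take k (OV \<Gamma>)) (take k (map Var (OV \<Gamma>)))) (snd (\<Gamma> ! k))) \<in> Jdg phi Sg"
    using \<open>k < length \<Gamma>\<close> by (simp add: take_map sb_Var subst_ty_Var, simp add: OV_def)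
qed (auto simp: OV_def)

lemma sel_standard: "sel as [1..<length as + 1] = as"
proof -
  have "[1..<length as + 1] = map Suc [0..<length as]"
    by (simp add: map_Suc_upt)
  then show ?thesis
    unfolding sel_def by (simp add: comp_def map_nth)
qed

lemma LT_pred_eq_rst_generic:
  assumes "var_system phi fr" "psig_standard Pi" "(\<Gamma>, is, R) \<in> Pi"
    and "morph (Jdg phi Sg) \<Delta> \<Gamma> as"
  shows "(\<Gamma>, Pred R (map Var (OV \<Gamma>))) \<in> hcar (Pr (LT phi fr Sg Pi T) \<Gamma>)"
    and "(\<Delta>, Pred R (sel as is)) =
           rst (LT phi fr Sg Pi T) (\<Delta>, \<Gamma>, as) (\<Gamma>, Pred R (map Var (OV \<Gamma>)))"
proof -
  have std: "is = [1..<length \<Gamma> + 1]"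
    using assms(2,3) unfolding psig_standard_def standard_seq_def by auto
  have ctx: "JCtx \<Gamma> \<in> Jdg phi Sg" and len: "length as = length \<Gamma>"
    using assms(4) unfolding morph_def by auto
  have generic_sel: "sel (map Var (OV \<Gamma>)) is = map Var (OV \<Gamma>)"
    using std sel_standard[of "map Var (OV \<Gamma>)"] by (simp add: OV_def)
  show "(\<Gamma>, Pred R (map Var (OV \<Gamma>))) \<in> hcar (Pr (LT phi fr Sg Pi T) \<Gamma>)"
    using F_pred[OF assms(3) morph_id[OF ctx]] unfolding generic_sel by (simp add: LT_def)
  show "(\<Delta>, Pred R (sel as is)) =
          rst (LT phi fr Sg Pi T) (\<Delta>, \<Gamma>, as) (\<Gamma>, Pred R (map Var (OV \<Gamma>)))"
    using std len sel_standard[of as] subst_tm_sb_OV[OF Jdg_distinct_OV[OF assms(1) ctx] len]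
    by (simp add: LT_def)
qed

lemma FSig_ext_de_bruijn:
  assumes "de_bruijn phi fr" "JCtx (\<Gamma> @ [(x, A)]) \<in> Jdg phi Sg"
  shows "ext (FSig phi fr Sg) \<Gamma> (\<Gamma>, A) = \<Gamma> @ [(x, A)]"
proof -
  have "x \<in> phi (vars_ctx \<Gamma>)"
    using JCtx_snocD[OF assms(2)] by blast
  then have "x = fresh fr \<Gamma>"
    using assms(1) finite_vars_ctx unfolding de_bruijn_def fresh_def by blast
  then show ?thesis
    by (simp add: FSig_def)
qed

lemma hdoc_mor_LT_agree_on_Form:
  assumes vs: "var_system phi fr" and db: "de_bruijn phi fr" and ps: "psig_standard Pi"
    and G: "is_hdoc_mor (FSig phi fr Sg) C F (LT phi fr Sg Pi T) D G"
    and G': "is_hdoc_mor (FSig phi fr Sg) C F (LT phi fr Sg Pi T) D G'"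
    and atoms: "\<forall>(\<Gamma>, is, R) \<in> Pi.
           G \<Gamma> (\<Gamma>, Pred R (map Var (OV \<Gamma>))) = G' \<Gamma> (\<Gamma>, Pred R (map Var (OV \<Gamma>)))"
  shows "(\<Gamma>, \<phi>) \<in> Form phi Sg Pi \<Longrightarrow> G \<Gamma> (\<Gamma>, \<phi>) = G' \<Gamma> (\<Gamma>, \<phi>)"
proof -
  let ?L = "LT phi fr Sg Pi T"
  note hom = is_hdoc_mor_heyt_hom[OF G] is_hdoc_mor_heyt_hom[OF G']
  have quant: "G \<Gamma> (\<Gamma>, FAll x A \<phi>) = G' \<Gamma> (\<Gamma>, FAll x A \<phi>) \<and>
      G \<Gamma> (\<Gamma>, FEx x A \<phi>) = G' \<Gamma> (\<Gamma>, FEx x A \<phi>)"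
    if "(\<Gamma> @ [(x, A)], \<phi>) \<in> Form phi Sg Pi" "JType \<Gamma> A \<in> Jdg phi Sg"
      and "G (\<Gamma> @ [(x, A)]) (\<Gamma> @ [(x, A)], \<phi>) = G' (\<Gamma> @ [(x, A)]) (\<Gamma> @ [(x, A)], \<phi>)"
    for \<Gamma> x A \<phi>
  proof -
    let ?S = "(\<Gamma>, A)"
    have ctx: "JCtx (\<Gamma> @ [(x, A)]) \<in> Jdg phi Sg"
      using Form_ctx[OF that(1)] .
    have ext: "ext (FSig phi fr Sg) \<Gamma> ?S = \<Gamma> @ [(x, A)]"
      using FSig_ext_de_bruijn[OF db ctx] .
    have ob: "\<Gamma> \<in> Ob (FSig phi fr Sg)" and ty: "?S \<in> Tys (FSig phi fr Sg) \<Gamma>"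
      using JCtx_snocD[OF ctx] that(2) by (simp_all add: FSig_def)
    have car: "(\<Gamma> @ [(x, A)], \<phi>) \<in> hcar (Pr ?L (ext (FSig phi fr Sg) \<Gamma> ?S))"
      using that(1) unfolding ext by (simp add: LT_def)
    have "G \<Gamma> (hall ?L \<Gamma> ?S (\<Gamma> @ [(x, A)], \<phi>)) = G' \<Gamma> (hall ?L \<Gamma> ?S (\<Gamma> @ [(x, A)], \<phi>))"
      "G \<Gamma> (hex ?L \<Gamma> ?S (\<Gamma> @ [(x, A)], \<phi>)) = G' \<Gamma> (hex ?L \<Gamma> ?S (\<Gamma> @ [(x, A)], \<phi>))"
      using hdoc_mor_agree_quant[OF G G' ob ty car, unfolded ext] that(3) by blast+
    then show ?thesis
      by (simp add: LT_def)
  qed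
  show "(\<Gamma>, \<phi>) \<in> Form phi Sg Pi \<Longrightarrow> G \<Gamma> (\<Gamma>, \<phi>) = G' \<Gamma> (\<Gamma>, \<phi>)"
  proof (induction rule: Form.induct)
    case (F_pred \<Gamma> "is" R \<Delta> as)
    note generic = LT_pred_eq_rst_generic[where T = T, OF vs ps F_pred]
    have "G \<Gamma> (\<Gamma>, Pred R (map Var (OV \<Gamma>))) = G' \<Gamma> (\<Gamma>, Pred R (map Var (OV \<Gamma>)))"
      using atoms F_pred(1) by auto
    with F_pred(2) have "G \<Delta> (rst ?L (\<Delta>, \<Gamma>, as) (\<Gamma>, Pred R (map Var (OV \<Gamma>))))
        = G' \<Delta> (rst ?L (\<Delta>, \<Gamma>, as) (\<Gamma>, Pred R (map Var (OV \<Gamma>))))"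
      by (intro hdoc_mor_agree_rst[OF G G' _ _ _ generic(1)]) (auto simp: FSig_def morph_def)
    then show ?case
      by (simp only: generic(2))
  next
    case (F_bot \<Gamma>)
    then show ?case
      using heyt_hom_agree_const(2)[OF hom[of \<Gamma>]] by (simp add: FSig_def LT_def)
  next
    case (F_top \<Gamma>)
    then show ?case
      using heyt_hom_agree_const(1)[OF hom[of \<Gamma>]] by (simp add: FSig_def LT_def)
  next
    case (F_conj \<Gamma> \<phi> \<psi>)
    then show ?case
      using heyt_hom_agree_ops(1)[OF hom[of \<Gamma>], of "(\<Gamma>, \<phi>)" "(\<Gamma>, \<psi>)"] Form_ctx[OF F_conj(1)]
      by (simp add: FSig_def LT_def)
  next
    case (F_disj \<Gamma> \<phi> \<psi>)
    then show ?case
      using heyt_hom_agree_ops(2)[OF hom[of \<Gamma>], of "(\<Gamma>, \<phi>)" "(\<Gamma>, \<psi>)"] Form_ctx[OF F_disj(1)]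
      by (simp add: FSig_def LT_def)
  next
    case (F_imp \<Gamma> \<phi> \<psi>)
    then show ?case
      using heyt_hom_agree_ops(3)[OF hom[of \<Gamma>], of "(\<Gamma>, \<phi>)" "(\<Gamma>, \<psi>)"] Form_ctx[OF F_imp(1)]
      by (simp add: FSig_def LT_def)
  next
    case (F_all \<Gamma> x A \<phi>)
    then show ?case
      using quant by blast
  next
    case (F_ex \<Gamma> x A \<phi>)
    then show ?case
      using quant by blast
  qed
qed

theorem mainTheorem18:
  fixes phi :: "'v set \<Rightarrow> 'v set" and fr :: "'v set \<Rightarrow> 'v"
    and Sg :: "('v, 'f, 's) sig" and Pi :: "('v, 'f, 's, 'p) psig"
    and T :: "('v, 'f, 's, 'p) sequent set"
    and C :: "('o, 'm, 't, 'e) cwf"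
    and F :: "(('v, 'f, 's) ctx, ('v, 'f, 's) fmor, ('v, 'f, 's) fty, ('v, 'f, 's) ftm,
               'o, 'm, 't, 'e) cwf_mor"
    and D :: "('o, 'm, 't, 'h) hdoc"
    and G G' :: "('v, 'f, 's) ctx \<Rightarrow> ('v, 'f, 's, 'p) lt \<Rightarrow> 'h"
  assumes "var_system phi fr" and "de_bruijn phi fr"
    and "is_signature phi Sg" and "is_pred_sig phi Sg Pi" and "is_theory phi Sg Pi T"
    and "sig_standard Sg" and "psig_standard Pi"
    and "is_cwf C"
    and "is_cwf_mor (FSig phi fr Sg) C F"
    and "is_hdoc C D"
    and "is_hdoc_mor (FSig phi fr Sg) C F (LT phi fr Sg Pi T) D G"
    and "is_hdoc_mor (FSig phi fr Sg) C F (LT phi fr Sg Pi T) D G'"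
    and "\<forall>(\<Gamma>, is, R) \<in> Pi.
           G \<Gamma> (\<Gamma>, Pred R (map Var (OV \<Gamma>))) = G' \<Gamma> (\<Gamma>, Pred R (map Var (OV \<Gamma>)))"
  shows "\<forall>\<Delta> \<in> Ob (FSig phi fr Sg). \<forall>P \<in> hcar (Pr (LT phi fr Sg Pi T) \<Delta>). G \<Delta> P = G' \<Delta> P"
proof (intro ballI)
  fix \<Delta> P
  assume "P \<in> hcar (Pr (LT phi fr Sg Pi T) \<Delta>)"
  then obtain \<phi> where "P = (\<Delta>, \<phi>)" and "(\<Delta>, \<phi>) \<in> Form phi Sg Pi"
    by (auto simp: LT_def)
  then show "G \<Delta> P = G' \<Delta> P"
    using hdoc_mor_LT_agree_on_Form[OF assms(1,2,7,11,12,13)] by simp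
qed

end
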